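(* Let $k\ge 1$ and $s\ge 1$ be integers with $s\le k$, and let $t$ be an integer. Then $$k\,\sigma_{k}^{(0)}(t;s)=\sum_{d\mid k}d\,\sigma^{(1)}_{d}(t;s),$$ with the convention $\sigma^{(1)}_{d}(t;s)=0$ if $s>d$. Equivalently, by Möbius inversion, $$k\,\sigma_{k}^{(1)}(t;s)=\sum_{d\mid k}\mu\!\left(\frac{k}{d}\right)d\,\sigma_{d}^{(0)}(t;s),$$ with the analogous convention $\sigma^{(0)}_d(t;s)=0$ if $s>d$.
   Context: For a positive integer $m$, $(q)_m=(1-q)\cdots(1-q^m)$, $(q)_0=1$. For integers $b\ge 0$, $n\ge1$ and $1\le s\le n$, let $R^{(b)}_{n,s}(q)=\sum_{t=0}^{n-1}\sigma^{(b)}_n(t;s)q^t$ be the remainder of $\frac{1}{n^b}(q)_{n-1}^{\,b}(q)_{s-1}$ upon division by $1-q^n$; the values $\sigma^{(b)}_n(t;s)$ are extended to all integers $t$ by $n$-periodicity. $\mu$ is the Möbius function. *)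

theory Defs
  imports "HOL-Computational_Algebra.Computational_Algebra"
begin

definition qpoch :: "nat \<Rightarrow> rat poly" where
  "qpoch m = (\<Prod>i\<in>{1..m}. 1 - monom 1 i)"

definition Rpoly :: "nat \<Rightarrow> nat \<Rightarrow> nat \<Rightarrow> rat poly" where
  "Rpoly b n s = smult (1 / (of_nat n) ^ b) (qpoch (n - 1) ^ b * qpoch (s - 1)) mod (1 - monom 1 n)"

definition sigma :: "nat \<Rightarrow> nat \<Rightarrow> int \<Rightarrow> nat \<Rightarrow> rat" where
  "sigma b n t s = coeff (Rpoly b n s) (nat (t mod int n))"

definition moebius :: "nat \<Rightarrow> int" where
  "moebius n = (if n = 0 then 0 else if squarefree n then (-1) ^ card (prime_factors n) else 0)"

end

(* Let F_k = (SUM d | d dvd k. (q)_(d-1) * (1 - q^k) / (1 - q^d)).  At a k-th root of unity z of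
   exact order e, the summand of d vanishes unless d = e: if z^d ~= 1 its geometric factor is 0,
   and if z^d = 1 with d > e then (z)_(d-1) contains the factor 1 - z^e.  The summand of e is
   (z)_(e-1) * k/e = k, because (1-z)...(1-z^(e-1)) is the value at 1 of
   (X - z)...(X - z^(e-1)) = 1 + X + ... + X^(e-1).  As 1 - q^k has the k distinct roots of unity
   as its roots, F_k = k modulo 1 - q^k.  Multiplying by (q)_(s-1) and reducing the d-th summand
   modulo 1 - q^d first, the factor (1 - q^k) / (1 - q^d) repeats the d coefficients of that
   remainder with period d up to degree k, which is the first identity read off coefficientwise. *)

theory Submission
  imports Defs
begin

lemma map_poly_of_rat_add:
  "map_poly (of_rat :: rat \<Rightarrow> 'a::field_char_0) (p + q) = map_poly of_rat p + map_poly of_rat q"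
  by (rule poly_eqI) (simp add: coeff_map_poly of_rat_add)

lemma map_poly_of_rat_diff:
  "map_poly (of_rat :: rat \<Rightarrow> 'a::field_char_0) (p - q) = map_poly of_rat p - map_poly of_rat q"
  by (rule poly_eqI) (simp add: coeff_map_poly of_rat_diff)

lemma map_poly_of_rat_mult:
  "map_poly (of_rat :: rat \<Rightarrow> 'a::field_char_0) (p * q) = map_poly of_rat p * map_poly of_rat q"
  by (rule poly_eqI) (simp add: coeff_map_poly coeff_mult of_rat_sum of_rat_mult)

lemma map_poly_of_rat_sum:
  "map_poly (of_rat :: rat \<Rightarrow> 'a::field_char_0) (\<Sum>x\<in>A. f x) = (\<Sum>x\<in>A. map_poly of_rat (f x))"
  by (induction A rule: infinite_finite_induct) (simp_all add: map_poly_of_rat_add)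

lemma map_poly_of_rat_prod:
  "map_poly (of_rat :: rat \<Rightarrow> 'a::field_char_0) (\<Prod>x\<in>A. f x) = (\<Prod>x\<in>A. map_poly of_rat (f x))"
  by (induction A rule: infinite_finite_induct) (simp_all add: map_poly_of_rat_mult)

lemma degree_one_minus_monom:
  assumes "n > 0"
  shows "degree (1 - monom (1::'a::comm_ring_1) n) = n"
proof -
  have "degree (1 + - monom (1::'a) n) = degree (- monom (1::'a) n)"
    using assms by (intro degree_add_eq_right) (simp add: degree_monom_eq)
  then show ?thesis
    by (simp add: degree_monom_eq)
qed

lemma poly_mod_sum_left:
  fixes m :: "'a::field poly"
  shows "(\<Sum>x\<in>A. f x) mod m = (\<Sum>x\<in>A. f x mod m)"
  by (induction A rule: infinite_finite_induct) (simp_all add: poly_mod_add_left)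

lemma one_minus_monom_dvdI:
  fixes p :: "rat poly"
  assumes "n > 0"
    and roots: "\<And>z::complex. z ^ n = 1 \<Longrightarrow> poly (map_poly of_rat p) z = 0"
  shows "1 - monom 1 n dvd p"
proof -
  define m where "m = 1 - monom (1::rat) n"
  define r where "r = p mod m"
  have deg_m: "degree m = n"
    unfolding m_def using assms(1) by (rule degree_one_minus_monom)
  have "map_poly of_rat r = (0 :: complex poly)"
  proof (rule poly_eqI_degree)
    fix z :: complex
    assume "z \<in> {z. z ^ n = 1}"
    then have "poly (map_poly of_rat m) z = 0"
      by (simp add: m_def map_poly_of_rat_diff map_poly_monom poly_monom)
    moreover have "poly (map_poly of_rat p) z
        = poly (map_poly of_rat (p div m)) z * poly (map_poly of_rat m) z + poly (map_poly of_rat r) z"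
      unfolding r_def by (metis div_mult_mod_eq map_poly_of_rat_add map_poly_of_rat_mult poly_add poly_mult)
    ultimately show "poly (map_poly of_rat r) z = poly 0 z"
      using roots \<open>z \<in> _\<close> by simp
  next
    have "degree r < n"
      using degree_mod_less'[of m p] deg_m assms(1) unfolding r_def by fastforce
    then show "degree (map_poly of_rat r :: complex poly) < card {z::complex. z ^ n = 1}"
      using assms(1) by (simp add: degree_map_poly card_roots_unity_eq)
  qed (use assms(1) card_roots_unity_eq in simp)
  then have "r = 0"
    by (simp add: map_poly_eq_0_iff)
  then show ?thesis
    by (simp add: r_def m_def mod_eq_0_iff_dvd)
qed

lemma inj_on_power_primitive_root:
  fixes z :: "'a::field"
  assumes "z ^ e = 1" and primitive: "\<And>i. 0 < i \<Longrightarrow> i < e \<Longrightarrow> z ^ i \<noteq> 1"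
  shows "inj_on (\<lambda>i. z ^ i) {..<e}"
proof (rule linorder_inj_onI')
  fix i j
  assume "i \<in> {..<e}" "j \<in> {..<e}" "i < j"
  moreover have "z \<noteq> 0"
    using assms(1) \<open>j \<in> {..<e}\<close> by (cases e) auto
  ultimately have "z ^ (j - i) \<noteq> 1"
    using primitive by simp
  moreover have "z ^ j = z ^ i * z ^ (j - i)"
    using \<open>i < j\<close> by (simp flip: power_add)
  ultimately show "z ^ i \<noteq> z ^ j"
    using \<open>z \<noteq> 0\<close> by auto
qed

lemma prod_one_minus_primitive_root_powers:
  fixes z :: "'a::field"
  assumes "e > 0" "z ^ e = 1" and primitive: "\<And>i. 0 < i \<Longrightarrow> i < e \<Longrightarrow> z ^ i \<noteq> 1"
  shows "(\<Prod>i\<in>{1..e-1}. 1 - z ^ i) = of_nat e"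
proof -
  define P where "P = (\<Prod>i\<in>{1..e-1}. [:- (z ^ i), 1:])"
  define G where "G = (\<Sum>j<e. monom (1::'a) j)"
  \<comment> \<open>Both are monic of degree \<open>e - 1\<close> with the \<open>e - 1\<close> distinct roots \<open>z ^ i\<close>.\<close>
  have "P = G"
  proof (rule poly_eqI_degree_lead_coeff[where n = "e - 1" and A = "(\<lambda>i. z ^ i) ` {1..e-1}"])
    have "degree P = e - 1"
      unfolding P_def by (subst degree_prod_sum_eq) auto
    moreover have "lead_coeff P = 1"
      unfolding P_def lead_coeff_prod by simp
    ultimately show "coeff P (e - 1) = coeff G (e - 1)" "degree P \<le> e - 1"
      using assms(1) by (simp_all add: G_def coeff_sum)
    show "degree G \<le> e - 1"
      unfolding G_def by (intro degree_sum_le) (auto intro: order.trans[OF degree_monom_le])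
    have "inj_on (\<lambda>i. z ^ i) {1..e-1}"
      using inj_on_power_primitive_root[OF assms(2) primitive] by (rule inj_on_subset) auto
    then show "e - 1 \<le> card ((\<lambda>i. z ^ i) ` {1..e-1})"
      by (simp add: card_image)
  next
    fix a
    assume "a \<in> (\<lambda>i. z ^ i) ` {1..e-1}"
    then obtain i where i: "i \<in> {1..e-1}" "a = z ^ i"
      by blast
    have "0 < i" "i < e"
      using i(1) assms(1) by auto
    then have "a \<noteq> 1"
      using primitive i(2) by simp
    moreover have "a ^ e = (z ^ e) ^ i"
      using i by (metis mult.commute power_mult)
    ultimately have "poly G a = 0"
      using assms(2)
      by (simp add: G_def poly_sum poly_monom geometric_sum)
    moreover have "poly P a = 0"
      unfolding P_def poly_prod using i by (auto intro!: prod_zero)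
    ultimately show "poly P a = poly G a"
      by simp
  qed
  then have "poly P 1 = poly G 1"
    by simp
  then show ?thesis
    by (simp add: P_def G_def poly_prod poly_sum poly_monom)
qed

lemma root_of_unity_orderE:
  fixes z :: "'a::field"
  assumes "n > 0" "z ^ n = 1"
  obtains e where "e > 0" "z ^ e = 1" "e dvd n" "\<And>i. 0 < i \<Longrightarrow> i < e \<Longrightarrow> z ^ i \<noteq> 1"
proof -
  define e where "e = (LEAST e. 0 < e \<and> z ^ e = 1)"
  have e: "0 < e" "z ^ e = 1"
    using LeastI_ex[of "\<lambda>e. 0 < e \<and> z ^ e = 1"] assms unfolding e_def by blast+
  have primitive: "z ^ i \<noteq> 1" if "0 < i" "i < e" for i
    using not_less_Least[of i "\<lambda>e. 0 < e \<and> z ^ e = 1"] that unfolding e_def by blast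
  have "z ^ n = (z ^ e) ^ (n div e) * z ^ (n mod e)"
    by (simp flip: power_mult power_add)
  then have "z ^ (n mod e) = 1"
    using assms e by simp
  then have "n mod e = 0"
    using primitive[of "n mod e"] e(1) by (cases "n mod e = 0") auto
  then show ?thesis
    using that e primitive by blast
qed

lemma divisor_sum_at_root_of_unity:
  fixes z :: "'a::field"
  assumes "k > 0" "z ^ k = 1"
  shows "(\<Sum>d | d dvd k. (\<Prod>i\<in>{1..d-1}. 1 - z ^ i) * (\<Sum>i<k div d. (z ^ d) ^ i)) = of_nat k"
proof -
  obtain e where e: "e > 0" "z ^ e = 1" "e dvd k"
    and primitive: "\<And>i. 0 < i \<Longrightarrow> i < e \<Longrightarrow> z ^ i \<noteq> 1"
    using root_of_unity_orderE[OF assms] by blast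
  define summand where "summand d = (\<Prod>i\<in>{1..d-1}. 1 - z ^ i) * (\<Sum>i<k div d. (z ^ d) ^ i)" for d
  have "summand d = 0" if d: "d dvd k" "d \<noteq> e" for d
  proof (cases "z ^ d = 1")
    case True
    then have "e < d"
      using primitive[of d] d dvd_pos_nat[OF assms(1)] by fastforce
    then have "(\<Prod>i\<in>{1..d-1}. 1 - z ^ i) = 0"
      using e by (intro prod_zero bexI[of _ e]) auto
    then show ?thesis
      by (simp add: summand_def)
  next
    case False
    have "(z ^ d) ^ (k div d) = 1"
      using d(1) assms(2) by (simp flip: power_mult)
    then show ?thesis
      using False by (simp add: summand_def geometric_sum)
  qed
  then have "(\<Sum>d | d dvd k. summand d) = (\<Sum>d | d dvd k. if d = e then summand e else 0)"
    by (intro sum.cong) auto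
  also have "\<dots> = summand e"
    using assms(1) e(3) by simp
  also have "\<dots> = of_nat e * of_nat (k div e)"
    using prod_one_minus_primitive_root_powers[OF e(1,2) primitive] e(2)
    by (simp add: summand_def)
  also have "\<dots> = of_nat k"
    using e(3) by (simp flip: of_nat_mult)
  finally show ?thesis
    by (simp add: summand_def)
qed

definition geom_poly :: "nat \<Rightarrow> nat \<Rightarrow> 'a::comm_ring_1 poly" where
  "geom_poly d m = (\<Sum>i<m. monom 1 (d * i))"

lemma one_minus_monom_mult_geom_poly:
  "(1 - monom 1 d) * geom_poly d m = (1 - monom 1 (d * m) :: 'a::comm_ring_1 poly)"
proof (induction m)
  case (Suc m)
  have "(1 - monom 1 d) * geom_poly d (Suc m)
      = (1 - monom 1 d) * geom_poly d m + (1 - monom 1 d) * (monom 1 (d * m) :: 'a poly)"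
    by (simp add: geom_poly_def distrib_left)
  also have "\<dots> = 1 - monom 1 (d * Suc m)"
    using Suc.IH by (simp add: algebra_simps mult_monom)
  finally show ?case .
qed (simp add: geom_poly_def)

lemma degree_geom_poly_le: "degree (geom_poly d m :: 'a::comm_ring_1 poly) \<le> d * (m - 1)"
  unfolding geom_poly_def
  by (intro degree_sum_le order.trans[OF degree_monom_le] mult_le_mono2) auto

definition qpoch_divisor_sum :: "nat \<Rightarrow> rat poly" where
  "qpoch_divisor_sum k = (\<Sum>d | d dvd k. qpoch (d - 1) * geom_poly d (k div d))"

lemma one_minus_monom_dvd_qpoch_divisor_sum:
  assumes "k > 0"
  shows "1 - monom 1 k dvd qpoch_divisor_sum k - of_nat k"
proof (rule one_minus_monom_dvdI[OF assms])
  fix z :: complex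
  assume "z ^ k = 1"
  have "poly (map_poly of_rat (qpoch_divisor_sum k)) z
      = (\<Sum>d | d dvd k. (\<Prod>i\<in>{1..d-1}. 1 - z ^ i) * (\<Sum>i<k div d. (z ^ d) ^ i))"
    by (simp add: qpoch_divisor_sum_def qpoch_def geom_poly_def map_poly_of_rat_sum
        map_poly_of_rat_prod map_poly_of_rat_mult map_poly_of_rat_diff map_poly_monom
        poly_sum poly_prod poly_monom power_mult)
  also have "\<dots> = of_nat k"
    using assms \<open>z ^ k = 1\<close> by (rule divisor_sum_at_root_of_unity)
  finally show "poly (map_poly of_rat (qpoch_divisor_sum k - of_nat k)) z = 0"
    by (simp add: map_poly_of_rat_diff of_nat_poly map_poly_pCons)
qed

lemma mult_le_sub_less_iff_eq_div:
  fixes d i r :: nat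
  assumes "d > 0"
  shows "d * i \<le> r \<and> r - d * i < d \<longleftrightarrow> i = r div d"
  using assms by (auto simp: div_nat_eqI minus_mod_eq_mult_div[symmetric])

lemma coeff_mult_geom_poly_mod:
  fixes p :: "'a::field poly"
  assumes "d > 0" "r < d * m"
  shows "coeff (p * geom_poly d m mod (1 - monom 1 (d * m))) r
       = coeff (p mod (1 - monom 1 d)) (r mod d)"
proof -
  define q where "q = p mod (1 - monom 1 d)"
  define g where "g = (geom_poly d m :: 'a poly)"
  have "m > 0"
    using assms by (cases m) auto
  have deg_q: "degree q < d"
    using degree_mod_less'[of "1 - monom 1 d" p] degree_one_minus_monom[OF assms(1), where 'a = 'a]
      assms(1) unfolding q_def by fastforce
  have "p - q = p div (1 - monom 1 d) * (1 - monom 1 d)"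
    by (simp add: q_def minus_mod_eq_div_mult)
  then have "p * g - q * g = p div (1 - monom 1 d) * ((1 - monom 1 d) * g)"
    by (metis left_diff_distrib mult.assoc)
  then have "p * g mod (1 - monom 1 (d * m)) = q * g mod (1 - monom 1 (d * m))"
    by (simp add: mod_eq_dvd_iff g_def one_minus_monom_mult_geom_poly)
  also have "\<dots> = q * g"
  proof (rule mod_poly_less)
    have "degree (q * g) \<le> (d - 1) + d * (m - 1)"
      using degree_mult_le[of q g] deg_q degree_geom_poly_le[of d m, where 'a = 'a]
      unfolding g_def by linarith
    also have "\<dots> < d * m"
      using assms(1) \<open>m > 0\<close> by (cases m) auto
    finally show "degree (q * g) < degree (1 - monom 1 (d * m) :: 'a poly)"
      using assms \<open>m > 0\<close> by (simp add: degree_one_minus_monom)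
  qed
  also have "coeff (q * g) r = (\<Sum>i<m. if d * i \<le> r then coeff q (r - d * i) else 0)"
    unfolding g_def geom_poly_def sum_distrib_left coeff_sum
    by (intro sum.cong) (auto simp: mult.commute[of q] coeff_monom_mult)
  also have "\<dots> = (\<Sum>i<m. if i = r div d then coeff q (r mod d) else 0)"
  proof (rule sum.cong[OF refl])
    fix i
    show "(if d * i \<le> r then coeff q (r - d * i) else 0) = (if i = r div d then coeff q (r mod d) else 0)"
    proof (cases "i = r div d")
      case True
      then show ?thesis
        by (simp add: minus_mod_eq_mult_div[symmetric])
    next
      case False
      then have "d * i \<le> r \<Longrightarrow> degree q < r - d * i"
        using mult_le_sub_less_iff_eq_div[OF assms(1)] deg_q by fastforce
      then show ?thesis
        using False by (auto intro: coeff_eq_0)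
    qed
  qed
  also have "\<dots> = coeff q (r mod d)"
    using assms by (simp add: less_mult_imp_div_less mult.commute)
  finally show ?thesis
    by (simp add: q_def g_def)
qed

lemma sigma_0_eq_coeff: "sigma 0 k t s = coeff (qpoch (s - 1) mod (1 - monom 1 k)) (nat (t mod int k))"
  by (simp add: sigma_def Rpoly_def)

lemma of_nat_mult_sigma_1_eq_coeff:
  assumes "d > 0"
  shows "of_nat d * sigma 1 d t s
       = coeff (qpoch (d - 1) * qpoch (s - 1) mod (1 - monom 1 d)) (nat (t mod int d))"
  using assms by (simp add: sigma_def Rpoly_def mod_smult_left)

lemma one_minus_monom_dvd_qpoch:
  assumes "0 < d" "d \<le> m"
  shows "1 - monom 1 d dvd qpoch m"
  unfolding qpoch_def using assms by (intro dvd_prodI) auto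

lemma nat_mod_int_mod_dvd:
  assumes "k > 0" "d dvd k"
  shows "nat (t mod int k) mod d = nat (t mod int d)"
proof -
  have "nat (t mod int k) mod d = nat (t mod int k mod int d)"
    using assms(1) by (simp add: nat_mod_distrib)
  also have "t mod int k mod int d = t mod int d"
    using assms(2) by (simp add: mod_mod_cancel)
  finally show ?thesis .
qed

lemma of_nat_mult_sigma_0_eq_divisor_sum:
  assumes "k > 0"
  shows "of_nat k * sigma 0 k t s = (\<Sum>d | d dvd k. of_nat d * (if s \<le> d then sigma 1 d t s else 0))"
proof -
  define a where "a = qpoch (s - 1)"
  define r where "r = nat (t mod int k)"
  have "r < k"
    using assms by (simp add: r_def nat_less_iff)
  have "(qpoch_divisor_sum k - of_nat k) * a = qpoch_divisor_sum k * a - smult (of_nat k) a"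
    by (simp add: algebra_simps of_nat_poly)
  then have cong: "smult (of_nat k) a mod (1 - monom 1 k) = qpoch_divisor_sum k * a mod (1 - monom 1 k)"
    using one_minus_monom_dvd_qpoch_divisor_sum[OF assms] by (metis dvd_mult2 mod_eq_dvd_iff)
  have "of_nat k * sigma 0 k t s = coeff (smult (of_nat k) a mod (1 - monom 1 k)) r"
    by (simp add: sigma_0_eq_coeff a_def r_def mod_smult_left)
  also have "\<dots> = coeff (qpoch_divisor_sum k * a mod (1 - monom 1 k)) r"
    by (simp only: cong)
  also have "\<dots> = (\<Sum>d | d dvd k. coeff (qpoch (d - 1) * a * geom_poly d (k div d) mod (1 - monom 1 k)) r)"
    unfolding qpoch_divisor_sum_def sum_distrib_right poly_mod_sum_left coeff_sum
    by (simp add: ac_simps)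
  also have "\<dots> = (\<Sum>d | d dvd k. of_nat d * (if s \<le> d then sigma 1 d t s else 0))"
  proof (rule sum.cong[OF refl])
    fix d
    assume "d \<in> {d. d dvd k}"
    then have "d dvd k" "d > 0"
      using dvd_pos_nat[OF assms] by auto
    then have "coeff (qpoch (d - 1) * a * geom_poly d (k div d) mod (1 - monom 1 k)) r
        = coeff (qpoch (d - 1) * a mod (1 - monom 1 d)) (nat (t mod int d))"
      using coeff_mult_geom_poly_mod[of d r "k div d" "qpoch (d - 1) * a"] \<open>r < k\<close>
      by (simp add: r_def nat_mod_int_mod_dvd[OF assms])
    also have "\<dots> = of_nat d * (if s \<le> d then sigma 1 d t s else 0)"
    proof (cases "s \<le> d")
      case True
      then show ?thesis
        using of_nat_mult_sigma_1_eq_coeff[OF \<open>d > 0\<close>, of t s] by (simp add: a_def)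
    next
      case False
      then have "1 - monom 1 d dvd a"
        using \<open>d > 0\<close> by (simp add: a_def one_minus_monom_dvd_qpoch)
      then show ?thesis
        using False by simp
    qed
    finally show "coeff (qpoch (d - 1) * a * geom_poly d (k div d) mod (1 - monom 1 k)) r
        = of_nat d * (if s \<le> d then sigma 1 d t s else 0)" .
  qed
  finally show ?thesis .
qed

lemma of_nat_mult_sigma_0_if_eq_divisor_sum:
  assumes "d > 0"
  shows "of_nat d * (if s \<le> d then sigma 0 d t s else 0)
       = (\<Sum>e | e dvd d. of_nat e * (if s \<le> e then sigma 1 e t s else 0))"
proof (cases "s \<le> d")
  case True
  then show ?thesis
    using of_nat_mult_sigma_0_eq_divisor_sum[OF assms] by simp
next
  case False
  then have "\<not> s \<le> e" if "e dvd d" for e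
    using dvd_imp_le[OF that assms] by simp
  then show ?thesis
    using False by (simp add: sum.neutral)
qed

lemma moebius_prime_mult:
  assumes "prime p" "d > 0" "\<not> p dvd d"
  shows "moebius (p * d) = - moebius d"
proof -
  have "coprime p d"
    using assms by (simp add: prime_imp_coprime)
  then have "squarefree (p * d) \<longleftrightarrow> squarefree d"
    using assms(1) squarefree_multD(2)[of p d] squarefree_mult_coprime squarefree_prime by blast
  moreover have "prime_factors (p * d) = insert p (prime_factors d)"
    using assms by (simp add: prime_factors_product prime_prime_factors prime_gt_0_nat)
  moreover have "p \<notin> prime_factors d"
    using assms(3) by auto
  ultimately show ?thesis
    using assms by (simp add: moebius_def prime_gt_0_nat)
qed

lemma moebius_eq_0_if_prime_square_dvd:
  assumes "prime p" "p ^ 2 dvd d"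
  shows "moebius d = 0"
proof -
  have "\<not> squarefree d"
    using assms unfolding squarefree_def by (metis not_prime_unit)
  then show ?thesis
    by (simp add: moebius_def)
qed

lemma sum_moebius_divisors:
  assumes "n > 0"
  shows "(\<Sum>d | d dvd n. moebius d) = (if n = 1 then 1 else 0)"
proof (cases "n = 1")
  case True
  then show ?thesis
    by (simp add: moebius_def)
next
  case False
  then obtain p where p: "prime p" "p dvd n"
    using prime_factor_nat by blast
  \<comment> \<open>The multiples \<open>p * e\<close> of the divisors \<open>e\<close> prime to \<open>p\<close> cancel them, since
     \<open>moebius (p * e) = - moebius e\<close>; all other divisors are divisible by \<open>p\<^sup>2\<close>.\<close>
  define coprime_divs where "coprime_divs = {d. d dvd n \<and> \<not> p dvd d}"
  have fin: "finite {d. d dvd n}" "finite {e. e dvd n div p}"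
    using assms p by (auto intro: finite_divisors_nat simp: dvd_div_eq_0_iff)
  have p_pos: "p > 0"
    using p(1) prime_gt_0_nat by blast
  have "d * p dvd n" if "d dvd n" "\<not> p dvd d" for d
    using divides_mult[OF that(1) p(2)] prime_imp_coprime[OF p(1) that(2)]
    by (simp add: coprime_commute)
  then have divs_diff: "{e. e dvd n div p} - {e. p dvd e} = coprime_divs"
    using p p_pos unfolding coprime_divs_def
    by (auto simp: dvd_div_iff_mult intro: dvd_mult_left)
  have divs_int: "{d. d dvd n} \<inter> {d. p dvd d} = (\<lambda>e. p * e) ` {e. e dvd n div p}"
    using p p_pos by (auto simp: dvd_div_iff_mult mult.commute elim!: dvdE)
  have "(\<Sum>d | d dvd n. moebius d)
      = (\<Sum>d\<in>(\<lambda>e. p * e) ` {e. e dvd n div p}. moebius d) + (\<Sum>d\<in>coprime_divs. moebius d)"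
    using sum.Int_Diff[OF fin(1), of moebius "{d. p dvd d}"] divs_int
    by (simp add: coprime_divs_def set_diff_eq)
  also have "(\<Sum>d\<in>(\<lambda>e. p * e) ` {e. e dvd n div p}. moebius d)
      = (\<Sum>e | e dvd n div p. moebius (p * e))"
    using p_pos by (simp add: sum.reindex inj_on_def)
  also have "\<dots> = (\<Sum>e\<in>{e. e dvd n div p} \<inter> {e. p dvd e}. moebius (p * e))
      + (\<Sum>e\<in>coprime_divs. moebius (p * e))"
    using sum.Int_Diff[OF fin(2), of "\<lambda>e. moebius (p * e)" "{e. p dvd e}"] divs_diff by simp
  also have "(\<Sum>e\<in>{e. e dvd n div p} \<inter> {e. p dvd e}. moebius (p * e)) = 0"
    using p(1) by (intro sum.neutral) (auto simp: power2_eq_square moebius_eq_0_if_prime_square_dvd)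
  also have "(\<Sum>e\<in>coprime_divs. moebius (p * e)) = - (\<Sum>d\<in>coprime_divs. moebius d)"
    using assms p(1) by (auto simp: coprime_divs_def sum_negf moebius_prime_mult dvd_pos_nat
        intro!: sum.cong)
  finally show ?thesis
    using False by simp
qed

lemma sum_divisors_between_reindex:
  fixes k e :: nat
  assumes "k > 0" "e dvd k"
  shows "(\<Sum>d | d dvd k \<and> e dvd d. h (k div d)) = (\<Sum>m | m dvd k div e. h m)"
proof -
  have divisor: "k div (k div d) = d \<and> k div d dvd k div e" if d: "d dvd k" "e dvd d" for d
  proof -
    obtain i l where "k = d * i" "d = e * l"
      using d by blast
    then show ?thesis
      using assms(1) by (simp add: mult.assoc)
  qed
  have quotient: "k div (k div m) = m \<and> k div m dvd k \<and> e dvd k div m" if m: "m dvd k div e" for m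
  proof -
    obtain j where "k div e = m * j"
      using m by blast
    then have "k = m * (e * j)"
      using assms(2) by (metis dvd_mult_div_cancel mult.left_commute)
    then show ?thesis
      using assms(1) by simp
  qed
  show ?thesis
    by (rule sum.reindex_bij_witness[where i = "\<lambda>m. k div m" and j = "\<lambda>d. k div d"])
      (use divisor quotient in auto)
qed

lemma moebius_inversion:
  fixes f g :: "nat \<Rightarrow> 'a::comm_ring_1"
  assumes "k > 0" and g: "\<And>d. d dvd k \<Longrightarrow> g d = (\<Sum>e | e dvd d. f e)"
  shows "(\<Sum>d | d dvd k. of_int (moebius (k div d)) * g d) = f k"
proof -
  define D where "D = {d. d dvd k}"
  have fin: "finite D"
    using assms(1) by (simp add: D_def)
  have "(\<Sum>d | d dvd k. of_int (moebius (k div d)) * g d)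
      = (\<Sum>d\<in>D. \<Sum>e | e \<in> D \<and> e dvd d. of_int (moebius (k div d)) * f e)"
  proof (rule sum.cong)
    fix d
    assume "d \<in> D"
    then have "{e. e dvd d} = {e. e \<in> D \<and> e dvd d}"
      by (auto simp: D_def intro: dvd_trans)
    then show "of_int (moebius (k div d)) * g d
        = (\<Sum>e | e \<in> D \<and> e dvd d. of_int (moebius (k div d)) * f e)"
      using g \<open>d \<in> D\<close> by (simp add: D_def sum_distrib_left)
  qed (simp add: D_def)
  also have "\<dots> = (\<Sum>e\<in>D. \<Sum>d | d \<in> D \<and> e dvd d. of_int (moebius (k div d)) * f e)"
    by (rule sum.swap_restrict[OF fin fin])
  also have "\<dots> = (\<Sum>e\<in>D. of_int (\<Sum>m | m dvd k div e. moebius m) * f e)"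
  proof (rule sum.cong[OF refl])
    fix e
    assume "e \<in> D"
    then show "(\<Sum>d | d \<in> D \<and> e dvd d. of_int (moebius (k div d)) * f e)
        = of_int (\<Sum>m | m dvd k div e. moebius m) * f e"
      using sum_divisors_between_reindex[OF assms(1), of e "\<lambda>m. of_int (moebius m) * f e"]
      by (simp add: D_def sum_distrib_right)
  qed
  also have "\<dots> = (\<Sum>e\<in>D. if e = k then f e else 0)"
  proof (rule sum.cong[OF refl])
    fix e
    assume "e \<in> D"
    then have "k div e > 0" "k div e = 1 \<longleftrightarrow> e = k"
      using assms(1) by (auto simp: D_def dvd_div_eq_0_iff elim!: dvdE)
    then show "of_int (\<Sum>m | m dvd k div e. moebius m) * f e = (if e = k then f e else 0)"
      by (simp add: sum_moebius_divisors)
  qed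
  also have "\<dots> = f k"
    using fin by (simp add: D_def)
  finally show ?thesis .
qed

theorem proposition2p11:
  fixes k s :: nat and t :: int
  assumes "1 \<le> k" and "1 \<le> s" and "s \<le> k"
  shows "of_nat k * sigma 0 k t s
           = (\<Sum>d | d dvd k. of_nat d * (if s \<le> d then sigma 1 d t s else 0))
       \<and> of_nat k * sigma 1 k t s
           = (\<Sum>d | d dvd k. of_int (moebius (k div d)) * of_nat d * (if s \<le> d then sigma 0 d t s else 0))"
proof
  have k: "k > 0"
    using assms(1) by simp
  show "of_nat k * sigma 0 k t s
      = (\<Sum>d | d dvd k. of_nat d * (if s \<le> d then sigma 1 d t s else 0))"
    using k by (rule of_nat_mult_sigma_0_eq_divisor_sum)
  have "(\<Sum>d | d dvd k. of_int (moebius (k div d)) * (of_nat d * (if s \<le> d then sigma 0 d t s else 0)))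
      = of_nat k * (if s \<le> k then sigma 1 k t s else 0)"
    by (rule moebius_inversion[OF k, where f = "\<lambda>e. of_nat e * (if s \<le> e then sigma 1 e t s else 0)"])
      (use k dvd_pos_nat of_nat_mult_sigma_0_if_eq_divisor_sum in blast)
  then show "of_nat k * sigma 1 k t s
      = (\<Sum>d | d dvd k. of_int (moebius (k div d)) * of_nat d * (if s \<le> d then sigma 0 d t s else 0))"
    using assms(3) by (simp add: mult.assoc)
qed

end
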